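(* Let $M$ be a connected topological manifold, $\Gamma$ a simple graph, and $H$ a complete subgraph of $\Gamma$. Then the map $\pi_\Gamma^H:\mathrm{Conf}_{\Gamma}(M)\to\mathrm{Conf}_{H}(M)$ is a (locally trivial) bundle projection.
   Context: For a graph $G$, $\mathrm{Conf}_{G}(M)=\{(x_v)_{v\in V(G)}\in M^{V(G)}: x_u\neq x_v\text{ whenever }\{u,v\}\in E(G)\}$. A complete subgraph $H$ of $\Gamma$ is a subgraph in which any two vertices are adjacent. The map $\pi_\Gamma^H$ sends $(x_v)_{v\in V(\Gamma)}$ to $(x_v)_{v\in V(H)}$ (forgetting the coordinates indexed by vertices not in $H$). *)

theory Defs
  imports "HOL-Analysis.Analysis"
begin

definition topological_manifold :: "'a topology \<Rightarrow> bool" where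
  "topological_manifold M \<longleftrightarrow> Hausdorff_space M \<and> second_countable M \<and>
     (\<exists>n. \<forall>x\<in>topspace M. \<exists>U. openin M U \<and> x \<in> U \<and>
        (\<exists>W. openin (Euclidean_space n) W \<and>
             subtopology M U homeomorphic_space subtopology (Euclidean_space n) W))"

definition simple_graph :: "'v set \<Rightarrow> 'v set set \<Rightarrow> bool" where
  "simple_graph V E \<longleftrightarrow> finite V \<and> E \<subseteq> {{u, v} | u v. u \<in> V \<and> v \<in> V \<and> u \<noteq> v}"

definition subgraph :: "'v set \<Rightarrow> 'v set set \<Rightarrow> 'v set \<Rightarrow> 'v set set \<Rightarrow> bool" where
  "subgraph W F V E \<longleftrightarrow> W \<subseteq> V \<and> F \<subseteq> E \<and> (\<forall>e\<in>F. e \<subseteq> W)"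

definition complete_subgraph :: "'v set \<Rightarrow> 'v set set \<Rightarrow> 'v set \<Rightarrow> 'v set set \<Rightarrow> bool" where
  "complete_subgraph W F V E \<longleftrightarrow> subgraph W F V E \<and>
     (\<forall>u\<in>W. \<forall>v\<in>W. u \<noteq> v \<longrightarrow> {u, v} \<in> F)"

definition Conf :: "'v set \<Rightarrow> 'v set set \<Rightarrow> 'a topology \<Rightarrow> ('v \<Rightarrow> 'a) topology" where
  "Conf V E M = subtopology (product_topology (\<lambda>_. M) V)
     {x \<in> topspace (product_topology (\<lambda>_. M) V). \<forall>u v. {u, v} \<in> E \<longrightarrow> x u \<noteq> x v}"

definition locally_trivial_bundle :: "'e topology \<Rightarrow> 'b topology \<Rightarrow> ('e \<Rightarrow> 'b) \<Rightarrow> bool" where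
  "locally_trivial_bundle E B p \<longleftrightarrow> continuous_map E B p \<and>
     (\<forall>b\<in>topspace B. \<exists>U. openin B U \<and> b \<in> U \<and>
        (\<exists>(F :: 'e topology) \<phi>.
           homeomorphic_map (subtopology E {e \<in> topspace E. p e \<in> U})
                            (prod_topology (subtopology B U) F) \<phi> \<and>
           (\<forall>e\<in>topspace E. p e \<in> U \<longrightarrow> fst (\<phi> e) = p e)))"

end

(* Over a neighbourhood of a configuration b of the complete subgraph, the restriction map is
   trivialised by homeomorphisms Theta y of M that depend continuously on the nearby configuration y
   and move each point b w to y w: then e |-> (y, Theta y^-1 o e), with y the restriction of e to W,
   maps the part of Conf_Gamma(M) over the neighbourhood homeomorphically onto its product with the
   fibre over b.  Completeness makes the points b w pairwise distinct, so they have disjoint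
   neighbourhoods and can be moved independently; a single point is moved inside a chart by a
   homeomorphism of a small cube that fixes everything outside the cube and carries its centre to
   any interior point, continuously in that point. *)

theory Submission
  imports Defs
begin

section \<open>Pushing the centre of a cube\<close>

primrec cube_norm :: "nat \<Rightarrow> (nat \<Rightarrow> real) \<Rightarrow> real" where
  "cube_norm 0 v = 0"
| "cube_norm (Suc n) v = max (cube_norm n v) \<bar>v n\<bar>"

lemma cube_norm_nonneg: "0 \<le> cube_norm n v"
  by (induction n) auto

lemma abs_le_cube_norm: "i < n \<Longrightarrow> \<bar>v i\<bar> \<le> cube_norm n v"
  by (induction n) (auto simp: less_Suc_eq)

lemma cube_norm_le: "(\<And>i. i < n \<Longrightarrow> \<bar>v i\<bar> \<le> t) \<Longrightarrow> 0 \<le> t \<Longrightarrow> cube_norm n v \<le> t"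
  by (induction n) auto

lemma cube_norm_le_iff: "0 \<le> t \<Longrightarrow> cube_norm n v \<le> t \<longleftrightarrow> (\<forall>i<n. \<bar>v i\<bar> \<le> t)"
  by (meson abs_le_cube_norm cube_norm_le order_trans)

lemma cube_norm_attained: "cube_norm n v = 0 \<or> (\<exists>i<n. \<bar>v i\<bar> = cube_norm n v)"
  by (induction n) (auto simp: max_def less_Suc_eq)

lemma cube_norm_zero [simp]: "cube_norm n (\<lambda>i. 0) = 0"
  by (induction n) auto

lemma continuous_map_cube_norm:
  "(\<And>i. continuous_map X euclideanreal (\<lambda>x. v x i)) \<Longrightarrow>
     continuous_map X euclideanreal (\<lambda>x. cube_norm n (v x))"
  by (induction n) (auto intro!: continuous_intros)

text \<open>For \<open>\<bar>s\<bar> < 1\<close>, \<open>shift_gauge s x\<close> is the radius \<open>t\<close> for which \<open>x\<close> lies on the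
  boundary of the interval of radius \<open>t\<close> centred at \<open>(1 - t) * s\<close>.\<close>
definition shift_gauge :: "real \<Rightarrow> real \<Rightarrow> real" where
  "shift_gauge s x = max ((x - s) / (1 - s)) ((s - x) / (1 + s))"

lemma shift_gauge_le:
  assumes "\<bar>s\<bar> < 1" "\<bar>x\<bar> \<le> t"
  shows "shift_gauge s (x + (1 - t) * s) \<le> t"
  using assms by (auto simp: shift_gauge_def divide_simps abs_le_iff abs_less_iff algebra_simps)

lemma shift_gauge_ge:
  assumes "\<bar>s\<bar> < 1" "\<bar>x\<bar> = t"
  shows "t \<le> shift_gauge s (x + (1 - t) * s)"
proof (cases "x \<ge> 0")
  case True
  have "t \<le> (x + (1 - t) * s - s) / (1 - s)"
    using assms True by (auto simp: divide_simps abs_less_iff algebra_simps)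
  then show ?thesis by (simp add: shift_gauge_def)
next
  case False
  have "t \<le> (s - (x + (1 - t) * s)) / (1 + s)"
    using assms False by (auto simp: divide_simps abs_less_iff algebra_simps)
  then show ?thesis by (simp add: shift_gauge_def)
qed

lemma shift_gauge_ge_one_iff:
  assumes "\<bar>s\<bar> < 1"
  shows "1 \<le> shift_gauge s x \<longleftrightarrow> 1 \<le> \<bar>x\<bar>"
  using assms by (auto simp: shift_gauge_def divide_simps abs_if le_max_iff_disj)

lemma shift_gauge_inverse_le:
  assumes "\<bar>s\<bar> < 1" "shift_gauge s u \<le> m"
  shows "\<bar>u - (1 - m) * s\<bar> \<le> m"
proof -
  have "(u - s) / (1 - s) \<le> m" "(s - u) / (1 + s) \<le> m"
    using assms by (auto simp: shift_gauge_def)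
  then show ?thesis
    using assms by (auto simp: divide_simps abs_if algebra_simps split: if_splits)
qed

lemma shift_gauge_inverse_ge:
  assumes "\<bar>s\<bar> < 1" "shift_gauge s u = m"
  shows "m \<le> \<bar>u - (1 - m) * s\<bar>"
proof -
  have "(u - s) / (1 - s) = m \<or> (s - u) / (1 + s) = m"
    using assms by (auto simp: shift_gauge_def max_def)
  then show ?thesis
    using assms by (auto simp: divide_simps abs_if algebra_simps split: if_splits)
qed

lemma continuous_map_shift_gauge:
  assumes "continuous_map X euclideanreal f" "continuous_map X euclideanreal g"
    and "\<And>x. x \<in> topspace X \<Longrightarrow> \<bar>f x\<bar> < 1"
  shows "continuous_map X euclideanreal (\<lambda>x. shift_gauge (f x) (g x))"
  unfolding shift_gauge_def
proof (intro continuous_intros assms)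
  show "1 - f x \<noteq> 0" "1 + f x \<noteq> 0" if "x \<in> topspace X" for x
    using assms(3)[OF that] by auto
qed auto

primrec cube_gauge :: "nat \<Rightarrow> (nat \<Rightarrow> real) \<Rightarrow> (nat \<Rightarrow> real) \<Rightarrow> real" where
  "cube_gauge 0 a u = 0"
| "cube_gauge (Suc n) a u = max (cube_gauge n a u) (shift_gauge (a n) (u n))"

lemma cube_gauge_nonneg: "0 \<le> cube_gauge n a u"
  by (induction n) auto

lemma shift_gauge_le_cube_gauge: "i < n \<Longrightarrow> shift_gauge (a i) (u i) \<le> cube_gauge n a u"
  by (induction n) (auto simp: less_Suc_eq)

lemma cube_gauge_le:
  "(\<And>i. i < n \<Longrightarrow> shift_gauge (a i) (u i) \<le> t) \<Longrightarrow> 0 \<le> t \<Longrightarrow> cube_gauge n a u \<le> t"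
  by (induction n) auto

lemma cube_gauge_attained: "cube_gauge n a u = 0 \<or> (\<exists>i<n. shift_gauge (a i) (u i) = cube_gauge n a u)"
  by (induction n) (auto simp: max_def less_Suc_eq)

lemma continuous_map_cube_gauge:
  assumes "\<And>i. continuous_map X euclideanreal (\<lambda>x. a x i)"
    and "\<And>i. continuous_map X euclideanreal (\<lambda>x. u x i)"
    and "\<And>x. x \<in> topspace X \<Longrightarrow> cube_norm n (a x) < 1"
  shows "continuous_map X euclideanreal (\<lambda>x. cube_gauge n (a x) (u x))"
  using assms(3)
proof (induction n)
  case (Suc n)
  have "continuous_map X euclideanreal (\<lambda>x. shift_gauge (a x n) (u x n))"
    using Suc.prems abs_le_cube_norm[of n "Suc n"]
    by (intro continuous_map_shift_gauge assms(1,2)) fastforce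
  moreover have "cube_norm n (a x) < 1" if "x \<in> topspace X" for x
    using Suc.prems[OF that] by simp
  ultimately show ?case
    using Suc.IH by (auto intro!: continuous_intros)
qed simp

lemma abs_lt_one_if_cube_norm_lt_one: "cube_norm n a < 1 \<Longrightarrow> i < n \<Longrightarrow> \<bar>a i\<bar> < 1"
  using abs_le_cube_norm[of i n a] by linarith

lemma cube_gauge_ge_one_iff:
  assumes "cube_norm n a < 1"
  shows "1 \<le> cube_gauge n a u \<longleftrightarrow> 1 \<le> cube_norm n u"
proof
  assume "1 \<le> cube_gauge n a u"
  then obtain i where i: "i < n" "shift_gauge (a i) (u i) = cube_gauge n a u"
    using cube_gauge_attained[of n a u] by auto
  then have "1 \<le> \<bar>u i\<bar>"
    using \<open>1 \<le> cube_gauge n a u\<close>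
      shift_gauge_ge_one_iff[OF abs_lt_one_if_cube_norm_lt_one[OF assms i(1)]] by metis
  then show "1 \<le> cube_norm n u"
    using abs_le_cube_norm[OF i(1), of u] by linarith
next
  assume "1 \<le> cube_norm n u"
  then obtain i where i: "i < n" "\<bar>u i\<bar> = cube_norm n u"
    using cube_norm_attained[of n u] by auto
  then have "1 \<le> shift_gauge (a i) (u i)"
    using \<open>1 \<le> cube_norm n u\<close>
      shift_gauge_ge_one_iff[OF abs_lt_one_if_cube_norm_lt_one[OF assms i(1)]] by simp
  then show "1 \<le> cube_gauge n a u"
    using shift_gauge_le_cube_gauge[OF i(1), of a u] by linarith
qed

text \<open>\<open>cube_push n a\<close> translates the boundary of the cube of radius \<open>t \<le> 1\<close> around \<open>0\<close> by
  \<open>(1 - t) a\<close>, onto the boundary of the cube of radius \<open>t\<close> around \<open>(1 - t) a\<close>; so it moves \<open>0\<close>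
  to \<open>a\<close> and fixes everything outside the unit cube. \<open>cube_gauge n a\<close> recovers \<open>t\<close> from the image.\<close>
definition cube_push :: "nat \<Rightarrow> (nat \<Rightarrow> real) \<Rightarrow> (nat \<Rightarrow> real) \<Rightarrow> (nat \<Rightarrow> real)" where
  "cube_push n a w = (\<lambda>i. w i + max 0 (1 - cube_norm n w) * a i)"

definition cube_pull :: "nat \<Rightarrow> (nat \<Rightarrow> real) \<Rightarrow> (nat \<Rightarrow> real) \<Rightarrow> (nat \<Rightarrow> real)" where
  "cube_pull n a u = (\<lambda>i. u i - max 0 (1 - cube_gauge n a u) * a i)"

lemma cube_gauge_cube_push:
  assumes a: "cube_norm n a < 1"
  shows "max 0 (1 - cube_gauge n a (cube_push n a w)) = max 0 (1 - cube_norm n w)"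
proof (cases "cube_norm n w \<le> 1")
  case True
  define t where "t = cube_norm n w"
  have push: "cube_push n a w i = w i + (1 - t) * a i" for i
    using True by (simp add: cube_push_def t_def)
  have "cube_gauge n a (cube_push n a w) \<le> t"
    unfolding push using abs_lt_one_if_cube_norm_lt_one[OF a]
    by (intro cube_gauge_le shift_gauge_le) (auto simp: t_def abs_le_cube_norm cube_norm_nonneg)
  moreover have "t \<le> cube_gauge n a (cube_push n a w)"
  proof (cases "t = 0")
    case False
    then obtain i where i: "i < n" "\<bar>w i\<bar> = t"
      using cube_norm_attained[of n w] by (auto simp: t_def)
    have "t \<le> shift_gauge (a i) (cube_push n a w i)"
      unfolding push by (rule shift_gauge_ge[OF abs_lt_one_if_cube_norm_lt_one[OF a i(1)] i(2)])
    then show ?thesis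
      using shift_gauge_le_cube_gauge[OF i(1)] by (meson order_trans)
  qed (simp add: cube_gauge_nonneg)
  ultimately show ?thesis by (simp add: t_def)
next
  case False
  then have "cube_push n a w = w" by (simp add: cube_push_def)
  then show ?thesis using cube_gauge_ge_one_iff[OF a, of "cube_push n a w"] False by simp
qed

lemma cube_norm_cube_pull:
  assumes a: "cube_norm n a < 1"
  shows "max 0 (1 - cube_norm n (cube_pull n a u)) = max 0 (1 - cube_gauge n a u)"
proof (cases "cube_gauge n a u \<le> 1")
  case True
  define m where "m = cube_gauge n a u"
  have pull: "cube_pull n a u i = u i - (1 - m) * a i" for i
    using True by (simp add: cube_pull_def m_def)
  have "cube_norm n (cube_pull n a u) \<le> m"
    unfolding pull using abs_lt_one_if_cube_norm_lt_one[OF a]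
    by (intro cube_norm_le shift_gauge_inverse_le)
      (auto simp: m_def shift_gauge_le_cube_gauge cube_gauge_nonneg)
  moreover have "m \<le> cube_norm n (cube_pull n a u)"
  proof (cases "m = 0")
    case False
    then obtain i where i: "i < n" "shift_gauge (a i) (u i) = m"
      using cube_gauge_attained[of n a u] by (auto simp: m_def)
    have "m \<le> \<bar>cube_pull n a u i\<bar>"
      unfolding pull by (rule shift_gauge_inverse_ge[OF abs_lt_one_if_cube_norm_lt_one[OF a i(1)] i(2)])
    then show ?thesis
      using abs_le_cube_norm[OF i(1)] by (meson order_trans)
  qed (simp add: cube_norm_nonneg)
  ultimately show ?thesis by (simp add: m_def)
next
  case False
  then have "cube_pull n a u = u" by (simp add: cube_pull_def)
  then show ?thesis using cube_gauge_ge_one_iff[OF a, of u] False by simp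
qed

lemma cube_pull_push: "cube_norm n a < 1 \<Longrightarrow> cube_pull n a (cube_push n a w) = w"
  by (simp add: cube_pull_def cube_gauge_cube_push) (simp add: cube_push_def)

lemma cube_push_pull: "cube_norm n a < 1 \<Longrightarrow> cube_push n a (cube_pull n a u) = u"
  by (simp add: cube_push_def cube_norm_cube_pull) (simp add: cube_pull_def)

lemma cube_push_zero: "cube_push n a (\<lambda>i. 0) = a"
  by (simp add: cube_push_def)

lemma cube_push_outside: "1 < cube_norm n w \<Longrightarrow> cube_push n a w = w"
  by (simp add: cube_push_def)

lemma cube_pull_outside: "cube_norm n a < 1 \<Longrightarrow> 1 < cube_norm n u \<Longrightarrow> cube_pull n a u = u"
  using cube_gauge_ge_one_iff[of n a u] by (simp add: cube_pull_def)

section \<open>Continuous families of homeomorphisms\<close>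

lemma continuous_map_open_cover:
  assumes "\<And>S. S \<in> \<S> \<Longrightarrow> openin X S"
    and "\<And>S. S \<in> \<S> \<Longrightarrow> continuous_map (subtopology X S) Y g"
    and "topspace X \<subseteq> \<Union>\<S>"
  shows "continuous_map X Y g"
  by (rule pasting_lemma[where I = \<S> and T = id and f = "\<lambda>_. g"]) (use assms in auto)

definition pushing_family ::
    "'a topology \<Rightarrow> 'a \<Rightarrow> 'a set \<Rightarrow> 'a set \<Rightarrow> ('a \<Rightarrow> 'a \<Rightarrow> 'a) \<Rightarrow> ('a \<Rightarrow> 'a \<Rightarrow> 'a) \<Rightarrow> bool" where
  "pushing_family X x N K \<theta> \<theta>' \<longleftrightarrow>
     openin X N \<and> x \<in> N \<and> compactin X K \<and> x \<in> K \<and> (\<forall>y\<in>N. \<theta> y x = y) \<and>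
     (\<forall>y\<in>N. \<forall>m\<in>topspace X. \<theta> y m \<in> topspace X \<and> \<theta>' y m \<in> topspace X \<and>
        \<theta> y (\<theta>' y m) = m \<and> \<theta>' y (\<theta> y m) = m) \<and>
     (\<forall>y\<in>N. \<forall>m\<in>topspace X - K. \<theta> y m = m \<and> \<theta>' y m = m) \<and>
     continuous_map (prod_topology (subtopology X N) X) X (\<lambda>p. \<theta> (fst p) (snd p)) \<and>
     continuous_map (prod_topology (subtopology X N) X) X (\<lambda>p. \<theta>' (fst p) (snd p))"

lemma pushing_family_maps_support:
  assumes push: "pushing_family X x N K \<theta> \<theta>'" and "y \<in> N" "m \<in> K"
  shows "\<theta> y m \<in> K" "\<theta>' y m \<in> K"
proof -
  have m: "m \<in> topspace X"
    using assms compactin_subset_topspace by (auto simp: pushing_family_def)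
  have inv: "\<theta> y (\<theta>' y m) = m" "\<theta>' y (\<theta> y m) = m"
    and top: "\<theta> y m \<in> topspace X" "\<theta>' y m \<in> topspace X"
    and outside: "\<And>m'. m' \<in> topspace X - K \<Longrightarrow> \<theta> y m' = m' \<and> \<theta>' y m' = m'"
    using push \<open>y \<in> N\<close> m by (auto simp: pushing_family_def)
  show "\<theta> y m \<in> K" "\<theta>' y m \<in> K"
    using outside[of "\<theta> y m"] outside[of "\<theta>' y m"] inv top \<open>m \<in> K\<close> by (metis DiffI)+
qed

lemma pushing_family_nbhd_subset_support:
  assumes "pushing_family X x N K \<theta> \<theta>'"
  shows "N \<subseteq> K"
proof
  fix y assume "y \<in> N"
  then show "y \<in> K"
    using assms pushing_family_maps_support(1)[OF assms, of y x] by (simp add: pushing_family_def)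
qed

lemma pushing_family_subtopology:
  assumes push: "pushing_family X x N K \<theta> \<theta>'" and "K \<subseteq> S"
  shows "pushing_family (subtopology X S) x N K \<theta> \<theta>'"
proof -
  have NS: "N \<subseteq> S"
    using pushing_family_nbhd_subset_support[OF push] \<open>K \<subseteq> S\<close> by blast
  have into_S: "\<theta> y m \<in> S" "\<theta>' y m \<in> S" if "y \<in> N" "m \<in> topspace X" "m \<in> S" for y m
    using that push pushing_family_maps_support[OF push that(1)] \<open>K \<subseteq> S\<close>
    by (cases "m \<in> K"; simp add: pushing_family_def subset_iff)+
  have dom: "prod_topology (subtopology (subtopology X S) N) (subtopology X S)
      = subtopology (prod_topology (subtopology X N) X) (UNIV \<times> S)"
    using NS by (simp add: subtopology_subtopology subtopology_Times Int_absorb1)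
  have cont: "continuous_map (prod_topology (subtopology (subtopology X S) N) (subtopology X S))
          (subtopology X S) (\<lambda>p. f (fst p) (snd p))"
    if "continuous_map (prod_topology (subtopology X N) X) X (\<lambda>p. f (fst p) (snd p))"
      and "\<And>y m. y \<in> N \<Longrightarrow> m \<in> topspace X \<Longrightarrow> m \<in> S \<Longrightarrow> f y m \<in> S" for f
    unfolding dom continuous_map_in_subtopology
    using that continuous_map_from_subtopology by fastforce
  have "openin (subtopology X S) N"
    using push NS openin_subtopology_Int2[of X N S] by (simp add: pushing_family_def Int_absorb1)
  then show ?thesis
    using push NS \<open>K \<subseteq> S\<close> into_S cont[of \<theta>] cont[of \<theta>']
    by (auto simp: pushing_family_def compactin_subtopology)
qed

lemma pushing_family_homeomorphic_maps:
  assumes push: "pushing_family X x N K \<theta> \<theta>'" and hom: "homeomorphic_maps X Y f g"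
  shows "pushing_family Y (f x) (f ` N) (f ` K)
           (\<lambda>y m. f (\<theta> (g y) (g m))) (\<lambda>y m. f (\<theta>' (g y) (g m)))"
proof -
  have f: "homeomorphic_map X Y f" and g: "homeomorphic_map Y X g"
    and gf: "\<And>m. m \<in> topspace X \<Longrightarrow> g (f m) = m"
    and fg: "\<And>m. m \<in> topspace Y \<Longrightarrow> f (g m) = m"
    using hom by (auto simp: homeomorphic_maps_map)
  have fX: "f m \<in> topspace Y" if "m \<in> topspace X" for m
    using f that homeomorphic_imp_surjective_map by blast
  have gY: "g m \<in> topspace X" if "m \<in> topspace Y" for m
    using g that homeomorphic_imp_surjective_map by blast
  have NX: "N \<subseteq> topspace X" and KX: "K \<subseteq> topspace X"
    using push by (auto simp: pushing_family_def dest: openin_subset compactin_subset_topspace)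
  have g_N: "continuous_map (subtopology Y (f ` N)) (subtopology X N) g"
    using homeomorphic_imp_continuous_map[OF g] NX gf
    by (auto simp: continuous_map_in_subtopology intro: continuous_map_from_subtopology)
  have cont: "continuous_map (prod_topology (subtopology Y (f ` N)) Y) Y (\<lambda>p. f (h (g (fst p)) (g (snd p))))"
    if "continuous_map (prod_topology (subtopology X N) X) X (\<lambda>p. h (fst p) (snd p))" for h
  proof -
    have pair: "continuous_map (prod_topology (subtopology Y (f ` N)) Y) (prod_topology (subtopology X N) X)
            (\<lambda>p. (g (fst p), g (snd p)))"
      unfolding continuous_map_paired
      using continuous_map_compose[OF continuous_map_fst g_N]
        continuous_map_compose[OF continuous_map_snd homeomorphic_imp_continuous_map[OF g]]
      unfolding o_def by blast
    have "continuous_map (prod_topology (subtopology Y (f ` N)) Y) X (\<lambda>p. h (g (fst p)) (g (snd p)))"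
      using continuous_map_compose[OF pair that] by (simp add: o_def)
    from continuous_map_compose[OF this homeomorphic_imp_continuous_map[OF f]]
    show ?thesis by (simp add: o_def)
  qed
  have outside: "g m \<notin> K" if "m \<in> topspace Y" "m \<notin> f ` K" for m
    using that fg by (metis image_eqI)
  show ?thesis
    using push NX KX unfolding pushing_family_def
    by (auto simp: homeomorphic_map_openness[OF f] homeomorphic_map_compactness[OF f]
        gf fg fX gY outside cont subset_iff)
qed

lemma pushing_family_extend:
  assumes "Hausdorff_space M" "openin M U" and push: "pushing_family (subtopology M U) x N K \<theta> \<theta>'"
  shows "pushing_family M x N K (\<lambda>y m. if m \<in> U then \<theta> y m else m) (\<lambda>y m. if m \<in> U then \<theta>' y m else m)"
proof -
  have openN_U: "openin (subtopology M U) N"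
    using push by (simp add: pushing_family_def)
  then have NU: "N \<subseteq> U" and NM: "N \<subseteq> topspace M" and openN: "openin M N"
    using openin_subset[OF openN_U] openin_trans_full[OF _ \<open>openin M U\<close>] by auto
  have KU: "K \<subseteq> U" and compactK: "compactin M K"
    using push by (auto simp: pushing_family_def compactin_subtopology)
  have closedK: "closedin M K"
    using compactK \<open>Hausdorff_space M\<close> compactin_imp_closedin by blast
  have cont: "continuous_map (prod_topology (subtopology M N) M) M
                (\<lambda>p. if snd p \<in> U then h (fst p) (snd p) else snd p)"
    if h: "continuous_map (prod_topology (subtopology (subtopology M U) N) (subtopology M U)) (subtopology M U)
             (\<lambda>p. h (fst p) (snd p))"
      and h_outside: "\<And>y m. y \<in> N \<Longrightarrow> m \<in> topspace M \<inter> U - K \<Longrightarrow> h y m = m" for h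
  proof (rule continuous_map_open_cover[where \<S> = "{N \<times> U, N \<times> (topspace M - K)}"])
    show "openin (prod_topology (subtopology M N) M) S" if "S \<in> {N \<times> U, N \<times> (topspace M - K)}" for S
      using that NM closedK \<open>openin M U\<close> by (auto simp: openin_prod_Times_iff openin_subtopology_refl closedin_def)
    have "subtopology (prod_topology (subtopology M N) M) (N \<times> U)
            = prod_topology (subtopology (subtopology M U) N) (subtopology M U)"
      using NU by (simp add: subtopology_Times subtopology_subtopology Int_absorb1 Int_absorb2)
    then have "continuous_map (subtopology (prod_topology (subtopology M N) M) (N \<times> U)) M
                (\<lambda>p. if snd p \<in> U then h (fst p) (snd p) else snd p)"
      using continuous_map_into_fulltopology[OF h] by (auto intro: continuous_map_eq)
    moreover have "continuous_map (subtopology (prod_topology (subtopology M N) M) (N \<times> (topspace M - K))) M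
                (\<lambda>p. if snd p \<in> U then h (fst p) (snd p) else snd p)"
      by (rule continuous_map_eq[OF continuous_map_from_subtopology[OF continuous_map_snd]])
        (use h_outside in auto)
    ultimately show "continuous_map (subtopology (prod_topology (subtopology M N) M) S) M
                (\<lambda>p. if snd p \<in> U then h (fst p) (snd p) else snd p)"
      if "S \<in> {N \<times> U, N \<times> (topspace M - K)}" for S
      using that by blast
    show "topspace (prod_topology (subtopology M N) M) \<subseteq> \<Union>{N \<times> U, N \<times> (topspace M - K)}"
      using KU by auto
  qed
  show ?thesis
    using push NU NM openN compactK KU unfolding pushing_family_def
    by (auto intro!: cont)
qed

section \<open>Pushing families on manifolds\<close>

lemma continuous_map_Euclidean_space_coordinate:
  "continuous_map (Euclidean_space n) euclideanreal (\<lambda>v. v i)"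
  unfolding Euclidean_space_def
  by (rule continuous_map_from_subtopology, rule continuous_map_product_projection) simp

lemma continuous_map_into_Euclidean_space:
  assumes "\<And>i. continuous_map X euclideanreal (\<lambda>x. f x i)"
    and "\<And>x i. x \<in> topspace X \<Longrightarrow> n \<le> i \<Longrightarrow> f x i = 0"
  shows "continuous_map X (Euclidean_space n) f"
  using assms by (auto simp: Euclidean_space_def continuous_map_in_subtopology continuous_map_componentwise_UNIV)

lemma Euclidean_space_openin_contains_cube:
  assumes "openin (Euclidean_space n) S" "c \<in> S"
  obtains r where "r > 0"
    "\<And>v. v \<in> topspace (Euclidean_space n) \<Longrightarrow> (\<forall>i<n. \<bar>v i - c i\<bar> \<le> r) \<Longrightarrow> v \<in> S"
proof -
  obtain T where T: "openin (powertop_real UNIV) T" "S = T \<inter> {x. \<forall>i\<ge>n. x i = 0}"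
    using assms(1) by (auto simp: Euclidean_space_def openin_subtopology)
  obtain U where U: "finite {i. U i \<noteq> UNIV}" "\<And>i. open (U i)" "c \<in> PiE UNIV U" "PiE UNIV U \<subseteq> T"
    using T assms(2) unfolding openin_product_topology_alt by force
  define J where "J = {i. U i \<noteq> UNIV}"
  have "\<forall>i\<in>J. \<exists>e>0. ball (c i) e \<subseteq> U i"
    using U(2,3) by (meson PiE_E UNIV_I open_contains_ball)
  then obtain e where e: "\<And>i. i \<in> J \<Longrightarrow> e i > 0 \<and> ball (c i) (e i) \<subseteq> U i"
    by metis
  define r where "r = Min (insert 1 (e ` J)) / 2"
  have fin: "finite (insert 1 (e ` J))"
    using U(1) J_def by simp
  have min_pos: "Min (insert 1 (e ` J)) > 0"
    using fin e by (auto simp: Min_gr_iff)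
  then have "r > 0"
    by (simp add: r_def)
  have r_less: "r < e i" if "i \<in> J" for i
    using Min_le[OF fin, of "e i"] min_pos that by (simp add: r_def)
  have "v \<in> S" if v: "v \<in> topspace (Euclidean_space n)" "\<forall>i<n. \<bar>v i - c i\<bar> \<le> r" for v
  proof -
    have "v i \<in> U i" for i
    proof (cases "i \<in> J")
      case True
      have "v i = c i \<or> dist (c i) (v i) < e i"
        using v T assms(2) r_less[OF True] by (cases "i < n") (auto simp: dist_real_def topspace_Euclidean_space)
      then show ?thesis
        using e[OF True] U(3) by auto
    qed (simp add: J_def)
    then show ?thesis
      using U(4) T(2) v(1) by (auto simp: topspace_Euclidean_space)
  qed
  then show ?thesis
    using \<open>r > 0\<close> that by blast
qed

lemma pushing_family_unit_cube:
  "pushing_family (Euclidean_space n) (\<lambda>i. 0)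
     {a \<in> topspace (Euclidean_space n). cube_norm n a < 1}
     {v \<in> topspace (Euclidean_space n). cube_norm n v \<le> 1} (cube_push n) (cube_pull n)"
  (is "pushing_family ?E _ ?N ?K _ _")
proof -
  have "openin ?E {a \<in> topspace ?E. cube_norm n a \<in> {..<1}}"
    using continuous_map_cube_norm[where v = "\<lambda>a. a", OF continuous_map_Euclidean_space_coordinate]
    by (rule openin_continuous_map_preimage) simp
  then have openN: "openin ?E ?N"
    by simp
  have K_eq: "?K = PiE UNIV (\<lambda>i. if i < n then {-1..1} else {0})"
    by (auto simp: cube_norm_le_iff PiE_iff topspace_Euclidean_space abs_le_iff not_less)
      (metis atLeastAtMost_iff singletonD not_less)+
  have "compactin (powertop_real UNIV) ?K"
    unfolding K_eq by (simp add: compactin_PiE compactin_euclidean_iff)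
  then have compactK: "compactin ?E ?K"
    by (auto simp: Euclidean_space_def compactin_subtopology topspace_Euclidean_space)
  have in_E: "cube_push n a w \<in> topspace ?E" "cube_pull n a w \<in> topspace ?E"
    if "a \<in> topspace ?E" "w \<in> topspace ?E" for a w
    using that by (auto simp: topspace_Euclidean_space cube_push_def cube_pull_def)
  have outside: "cube_push n a w = w" "cube_pull n a w = w" if "a \<in> ?N" "w \<in> topspace ?E - ?K" for a w
    using that by (auto simp: cube_push_outside cube_pull_outside)
  define P where "P = prod_topology (subtopology ?E ?N) ?E"
  have fst_coord: "continuous_map P euclideanreal (\<lambda>p. fst p i)"
    and snd_coord: "continuous_map P euclideanreal (\<lambda>p. snd p i)" for i
    unfolding P_def
    using continuous_map_compose[OF continuous_map_fst continuous_map_from_subtopology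
        [OF continuous_map_Euclidean_space_coordinate]]
      continuous_map_compose[OF continuous_map_snd continuous_map_Euclidean_space_coordinate]
    by (auto simp: o_def)
  have "continuous_map P ?E (\<lambda>p. cube_push n (fst p) (snd p))"
    using in_E(1) unfolding cube_push_def
    by (intro continuous_map_into_Euclidean_space continuous_intros continuous_map_cube_norm
        fst_coord snd_coord) (auto simp: P_def topspace_Euclidean_space)
  moreover have "continuous_map P ?E (\<lambda>p. cube_pull n (fst p) (snd p))"
    using in_E(2) unfolding cube_pull_def
    by (intro continuous_map_into_Euclidean_space continuous_intros continuous_map_cube_gauge
        fst_coord snd_coord) (auto simp: P_def topspace_Euclidean_space)
  ultimately show ?thesis
    using openN compactK in_E outside unfolding pushing_family_def P_def
    by (auto simp: topspace_Euclidean_space cube_push_zero cube_pull_push cube_push_pull)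
qed

lemma Euclidean_space_pushing_family:
  assumes "openin (Euclidean_space n) S" "c \<in> S"
  obtains N K \<theta> \<theta>' where "pushing_family (Euclidean_space n) c N K \<theta> \<theta>'" "K \<subseteq> S"
proof -
  let ?E = "Euclidean_space n"
  obtain r where "r > 0"
    and cube: "\<And>v. v \<in> topspace ?E \<Longrightarrow> (\<forall>i<n. \<bar>v i - c i\<bar> \<le> r) \<Longrightarrow> v \<in> S"
    using Euclidean_space_openin_contains_cube[OF assms] by blast
  have c: "c \<in> topspace ?E"
    using assms openin_subset by blast
  define f where "f v = (\<lambda>i. c i + r * v i)" for v :: "nat \<Rightarrow> real"
  define g where "g u = (\<lambda>i. (u i - c i) / r)" for u :: "nat \<Rightarrow> real"
  have "homeomorphic_maps ?E ?E f g"
    unfolding homeomorphic_maps_def f_def g_def using c \<open>r > 0\<close>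
    by (auto intro!: continuous_map_into_Euclidean_space continuous_intros
        continuous_map_Euclidean_space_coordinate simp: topspace_Euclidean_space)
  from pushing_family_homeomorphic_maps[OF pushing_family_unit_cube this]
  have "pushing_family ?E c (f ` {a \<in> topspace ?E. cube_norm n a < 1})
          (f ` {v \<in> topspace ?E. cube_norm n v \<le> 1})
          (\<lambda>y m. f (cube_push n (g y) (g m))) (\<lambda>y m. f (cube_pull n (g y) (g m)))"
    by (simp add: f_def)
  moreover have "f ` {v \<in> topspace ?E. cube_norm n v \<le> 1} \<subseteq> S"
  proof clarify
    fix v assume v: "v \<in> topspace ?E" "cube_norm n v \<le> 1"
    have "\<bar>f v i - c i\<bar> \<le> r" if "i < n" for i
      using abs_le_cube_norm[OF that, of v] v(2) \<open>r > 0\<close>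
      by (simp add: f_def abs_mult mult_le_cancel_left1)
    moreover have "f v \<in> topspace ?E"
      using v(1) c by (simp add: f_def topspace_Euclidean_space)
    ultimately show "f v \<in> S"
      using cube by blast
  qed
  ultimately show ?thesis
    using that by blast
qed

lemma topological_manifold_pushing_family:
  assumes M: "topological_manifold M" and "openin M G" "x \<in> G"
  obtains N K \<theta> \<theta>' where "pushing_family M x N K \<theta> \<theta>'" "K \<subseteq> G"
proof -
  have x: "x \<in> topspace M"
    using assms openin_subset by blast
  obtain n U W f g where U: "openin M U" "x \<in> U" and W: "openin (Euclidean_space n) W"
    and hom: "homeomorphic_maps (subtopology M U) (subtopology (Euclidean_space n) W) f g"
    using M x by (auto simp: topological_manifold_def homeomorphic_space_def)
  let ?MU = "subtopology M U" and ?EW = "subtopology (Euclidean_space n) W"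
  have GU: "openin ?MU (G \<inter> U)" "G \<inter> U \<subseteq> topspace ?MU"
    using \<open>openin M G\<close> openin_subset[OF \<open>openin M G\<close>] by (auto simp: openin_subtopology_Int)
  then have "openin ?EW (f ` (G \<inter> U))"
    using homeomorphic_map_openness[OF homeomorphic_maps_imp_map[OF hom]] by blast
  then have open_fGU: "openin (Euclidean_space n) (f ` (G \<inter> U))"
    using W openin_trans_full by blast
  have fx: "f x \<in> f ` (G \<inter> U)"
    using \<open>x \<in> G\<close> U by blast
  obtain N K \<theta> \<theta>' where push: "pushing_family (Euclidean_space n) (f x) N K \<theta> \<theta>'"
    and K: "K \<subseteq> f ` (G \<inter> U)"
    using Euclidean_space_pushing_family[OF open_fGU fx] by blast
  have "f ` (G \<inter> U) \<subseteq> W"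
    using openin_subset[OF \<open>openin ?EW (f ` (G \<inter> U))\<close>] by auto
  then have push_W: "pushing_family ?EW (f x) N K \<theta> \<theta>'"
    using pushing_family_subtopology[OF push] K by blast
  have gf: "g (f m) = m" if "m \<in> topspace ?MU" for m
    using hom that by (simp add: homeomorphic_maps_def)
  from pushing_family_homeomorphic_maps[OF push_W homeomorphic_maps_sym[THEN iffD1, OF hom]]
  have "pushing_family ?MU x (g ` N) (g ` K) (\<lambda>y m. g (\<theta> (f y) (f m))) (\<lambda>y m. g (\<theta>' (f y) (f m)))"
    using gf[of x] x U by simp
  from pushing_family_extend[OF _ U(1) this]
  have "pushing_family M x (g ` N) (g ` K) (\<lambda>y m. if m \<in> U then g (\<theta> (f y) (f m)) else m)
          (\<lambda>y m. if m \<in> U then g (\<theta>' (f y) (f m)) else m)"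
    using M by (simp add: topological_manifold_def)
  moreover have "g ` K \<subseteq> G"
  proof
    fix k assume "k \<in> g ` K"
    then obtain m where "m \<in> G \<inter> U" "k = g (f m)"
      using K by blast
    then show "k \<in> G"
      using gf GU(2) by auto
  qed
  ultimately show ?thesis
    using that by blast
qed

section \<open>Moving finitely many points at once\<close>

lemma Hausdorff_space_separate_finite:
  assumes "Hausdorff_space M" "finite W" "\<And>w. w \<in> W \<Longrightarrow> b w \<in> topspace M" "inj_on b W"
  obtains G where "\<And>w. w \<in> W \<Longrightarrow> openin M (G w) \<and> b w \<in> G w"
    and "disjoint_family_on G W"
proof -
  have "\<exists>A B. openin M A \<and> openin M B \<and> b u \<in> A \<and> b v \<in> B \<and> disjnt A B"
    if "u \<in> W" "v \<in> W" "u \<noteq> v" for u v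
  proof -
    have "b u \<noteq> b v"
      using \<open>inj_on b W\<close> that by (auto dest: inj_onD)
    then show ?thesis
      using assms(1,3) that unfolding Hausdorff_space_def by blast
  qed
  then obtain A B where AB: "\<And>u v. u \<in> W \<Longrightarrow> v \<in> W \<Longrightarrow> u \<noteq> v \<Longrightarrow>
      openin M (A u v) \<and> openin M (B u v) \<and> b u \<in> A u v \<and> b v \<in> B u v \<and> disjnt (A u v) (B u v)"
    by metis
  define G where "G w = (\<Inter>w' \<in> W - {w}. A w w' \<inter> B w' w) \<inter> topspace M" for w
  show ?thesis
  proof
    show "openin M (G w) \<and> b w \<in> G w" if "w \<in> W" for w
      unfolding G_def using assms(2,3) AB that by (auto intro!: openin_INT)
    show "disjoint_family_on G W"
      unfolding disjoint_family_on_def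
    proof (intro ballI impI)
      fix w w' assume "w \<in> W" "w' \<in> W" "w \<noteq> w'"
      then show "G w \<inter> G w' = {}"
        using AB[OF \<open>w \<in> W\<close> \<open>w' \<in> W\<close> \<open>w \<noteq> w'\<close>] unfolding G_def disjnt_def by blast
    qed
  qed
qed

definition glue :: "'v set \<Rightarrow> ('v \<Rightarrow> 'a set) \<Rightarrow> ('v \<Rightarrow> 'b \<Rightarrow> 'a \<Rightarrow> 'a) \<Rightarrow> ('v \<Rightarrow> 'b) \<Rightarrow> 'a \<Rightarrow> 'a" where
  "glue W K T y m =
     (if \<exists>w\<in>W. m \<in> K w then let w = SOME w. w \<in> W \<and> m \<in> K w in T w (y w) m else m)"

lemma glue_eq:
  assumes "disjoint_family_on K W" "w \<in> W" "m \<in> K w"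
  shows "glue W K T y m = T w (y w) m"
proof -
  have "(SOME w. w \<in> W \<and> m \<in> K w) = w"
    using assms by (intro some_equality) (auto simp: disjoint_family_on_def)
  then show ?thesis
    using assms by (auto simp: glue_def)
qed

lemma glue_outside: "(\<And>w. w \<in> W \<Longrightarrow> m \<notin> K w) \<Longrightarrow> glue W K T y m = m"
  by (auto simp: glue_def)

lemma continuous_map_glue:
  assumes "finite W" and closed: "\<And>w. w \<in> W \<Longrightarrow> closedin M (K w)" and disj: "disjoint_family_on K W"
    and T: "\<And>w. w \<in> W \<Longrightarrow> continuous_map (prod_topology (subtopology M (N w)) M) M (\<lambda>p. T w (fst p) (snd p))"
    and T_outside: "\<And>w z m. w \<in> W \<Longrightarrow> z \<in> N w \<Longrightarrow> m \<in> topspace M - K w \<Longrightarrow> T w z m = m"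
    and Y: "\<And>w. w \<in> W \<Longrightarrow> continuous_map Y (subtopology M (N w)) (\<lambda>y. y w)"
  shows "continuous_map (prod_topology Y M) M (\<lambda>p. glue W K T (fst p) (snd p))"
proof -
  define away where "away V = topspace Y \<times> (topspace M - \<Union>(K ` V))" for V
  show ?thesis
  proof (rule continuous_map_open_cover[where \<S> = "insert (away W) ((\<lambda>w. away (W - {w})) ` W)"])
    have "closedin M (\<Union>(K ` V))" if "V \<subseteq> W" for V
      using that finite_subset[OF that \<open>finite W\<close>] closed by (intro closedin_Union) auto
    then have "openin (prod_topology Y M) (away V)" if "V \<subseteq> W" for V
      using that by (auto simp: away_def openin_prod_Times_iff closedin_def)
    then show "openin (prod_topology Y M) S" if "S \<in> insert (away W) ((\<lambda>w. away (W - {w})) ` W)" for S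
      using that by blast
    have "continuous_map (subtopology (prod_topology Y M) (away W)) M (\<lambda>p. glue W K T (fst p) (snd p))"
      by (rule continuous_map_eq[OF continuous_map_from_subtopology[OF continuous_map_snd]])
        (auto simp: away_def glue_outside)
    moreover have "continuous_map (subtopology (prod_topology Y M) (away (W - {w}))) M
                     (\<lambda>p. glue W K T (fst p) (snd p))" if "w \<in> W" for w
    proof -
      have "continuous_map (prod_topology Y M) (prod_topology (subtopology M (N w)) M) (\<lambda>p. (fst p w, snd p))"
        using continuous_map_compose[OF continuous_map_fst Y[OF that]]
        by (simp add: continuous_map_paired o_def continuous_map_snd)
      from continuous_map_compose[OF this T[OF that]]
      have cont_T: "continuous_map (prod_topology Y M) M (\<lambda>p. T w (fst p w) (snd p))"
        by (simp add: o_def)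
      have eq_T: "T w (fst p w) (snd p) = glue W K T (fst p) (snd p)"
        if "p \<in> topspace (subtopology (prod_topology Y M) (away (W - {w})))" for p
      proof (cases "snd p \<in> K w")
        case True
        show ?thesis
          by (rule glue_eq[OF disj \<open>w \<in> W\<close> True, symmetric])
      next
        case False
        have "fst p w \<in> N w"
          using that Y[OF \<open>w \<in> W\<close>] continuous_map_image_subset_topspace by (fastforce simp: away_def)
        moreover have "glue W K T (fst p) (snd p) = snd p"
          using that False by (intro glue_outside) (auto simp: away_def)
        ultimately show ?thesis
          using that False T_outside[OF \<open>w \<in> W\<close>] by (auto simp: away_def)
      qed
      show ?thesis
        by (rule continuous_map_eq[OF continuous_map_from_subtopology[OF cont_T] eq_T])
    qed
    ultimately show "continuous_map (subtopology (prod_topology Y M) S) M (\<lambda>p. glue W K T (fst p) (snd p))"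
      if "S \<in> insert (away W) ((\<lambda>w. away (W - {w})) ` W)" for S
      using that by blast
    show "topspace (prod_topology Y M) \<subseteq> \<Union> (insert (away W) ((\<lambda>w. away (W - {w})) ` W))"
    proof clarify
      fix y m assume "(y, m) \<in> topspace (prod_topology Y M)"
      then have ym: "(y, m) \<in> topspace Y \<times> topspace M"
        by simp
      show "(y, m) \<in> \<Union> (insert (away W) ((\<lambda>w. away (W - {w})) ` W))"
      proof (cases "\<exists>w\<in>W. m \<in> K w")
        case True
        then obtain w where "w \<in> W" "m \<in> K w"
          by blast
        then have "(y, m) \<in> away (W - {w})"
          using ym disj by (auto simp: away_def disjoint_family_on_def)
        then show ?thesis
          using \<open>w \<in> W\<close> by blast
      next
        case False
        then show ?thesis
          using ym by (auto simp: away_def)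
      qed
    qed
  qed
qed

definition simultaneous_pushing ::
    "'a topology \<Rightarrow> ('v \<Rightarrow> 'a) topology \<Rightarrow> 'v set \<Rightarrow> ('v \<Rightarrow> 'a) \<Rightarrow>
      (('v \<Rightarrow> 'a) \<Rightarrow> 'a \<Rightarrow> 'a) \<Rightarrow> (('v \<Rightarrow> 'a) \<Rightarrow> 'a \<Rightarrow> 'a) \<Rightarrow> bool" where
  "simultaneous_pushing M Y W b \<Theta> \<Theta>' \<longleftrightarrow>
     (\<forall>y\<in>topspace Y. \<forall>m\<in>topspace M. \<Theta> y m \<in> topspace M \<and> \<Theta>' y m \<in> topspace M \<and>
        \<Theta> y (\<Theta>' y m) = m \<and> \<Theta>' y (\<Theta> y m) = m) \<and>
     (\<forall>y\<in>topspace Y. \<forall>w\<in>W. \<Theta> y (b w) = y w) \<and>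
     continuous_map (prod_topology Y M) M (\<lambda>p. \<Theta> (fst p) (snd p)) \<and>
     continuous_map (prod_topology Y M) M (\<lambda>p. \<Theta>' (fst p) (snd p))"

lemma simultaneous_pushing_glue:
  assumes "Hausdorff_space M" "finite W" and disj: "disjoint_family_on K W"
    and push: "\<And>w. w \<in> W \<Longrightarrow> pushing_family M (b w) (N w) (K w) (T w) (T' w)"
    and Y: "\<And>w. w \<in> W \<Longrightarrow> continuous_map Y (subtopology M (N w)) (\<lambda>y. y w)"
  shows "simultaneous_pushing M Y W b (glue W K T) (glue W K T')"
proof -
  have yN: "y w \<in> N w" if "y \<in> topspace Y" "w \<in> W" for y w
    using continuous_map_image_subset_topspace[OF Y[OF that(2)]] that by auto
  have closed: "closedin M (K w)" if "w \<in> W" for w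
    using push[OF that] \<open>Hausdorff_space M\<close> compactin_imp_closedin by (auto simp: pushing_family_def)
  have inverse: "glue W K T y m \<in> topspace M \<and> glue W K T' y m \<in> topspace M \<and>
      glue W K T y (glue W K T' y m) = m \<and> glue W K T' y (glue W K T y m) = m"
    if "y \<in> topspace Y" "m \<in> topspace M" for y m
  proof (cases "\<exists>w\<in>W. m \<in> K w")
    case True
    then obtain w where w: "w \<in> W" "m \<in> K w"
      by blast
    note push_w = push[OF w(1)] and y_w = yN[OF that(1) w(1)]
    have "T w (y w) m \<in> K w" "T' w (y w) m \<in> K w"
      using pushing_family_maps_support[OF push_w y_w w(2)] by auto
    then show ?thesis
      using push_w y_w that(2) w by (simp add: glue_eq[OF disj] pushing_family_def)
  qed (use that in \<open>simp add: glue_outside\<close>)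
  have moves: "glue W K T y (b w) = y w" if "y \<in> topspace Y" "w \<in> W" for y w
    using push[OF that(2)] yN[OF that] by (simp add: glue_eq[OF disj that(2)] pushing_family_def)
  have "continuous_map (prod_topology Y M) M (\<lambda>p. glue W K T (fst p) (snd p))"
    "continuous_map (prod_topology Y M) M (\<lambda>p. glue W K T' (fst p) (snd p))"
    using push by (intro continuous_map_glue[OF \<open>finite W\<close> closed disj _ _ Y]; force simp: pushing_family_def)+
  then show ?thesis
    using inverse moves by (simp add: simultaneous_pushing_def)
qed

lemma topological_manifold_simultaneous_pushing:
  assumes M: "topological_manifold M" and "finite W"
    and b: "\<And>w. w \<in> W \<Longrightarrow> b w \<in> topspace M" "inj_on b W"
  obtains N \<Theta> \<Theta>' where "\<And>w. w \<in> W \<Longrightarrow> openin M (N w) \<and> b w \<in> N w"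
    and "\<And>Y. (\<And>w. w \<in> W \<Longrightarrow> continuous_map Y (subtopology M (N w)) (\<lambda>y. y w)) \<Longrightarrow>
           simultaneous_pushing M Y W b \<Theta> \<Theta>'"
proof -
  have Hausdorff: "Hausdorff_space M"
    using M by (simp add: topological_manifold_def)
  obtain G where G: "\<And>w. w \<in> W \<Longrightarrow> openin M (G w) \<and> b w \<in> G w"
    and G_disj: "disjoint_family_on G W"
    using Hausdorff_space_separate_finite[OF Hausdorff \<open>finite W\<close> b] by blast
  have "\<exists>N K T T'. pushing_family M (b w) N K T T' \<and> K \<subseteq> G w" if "w \<in> W" for w
    using topological_manifold_pushing_family[OF M] G[OF that] by metis
  then obtain N K T T' where push: "\<And>w. w \<in> W \<Longrightarrow> pushing_family M (b w) (N w) (K w) (T w) (T' w)"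
    and KG: "\<And>w. w \<in> W \<Longrightarrow> K w \<subseteq> G w"
    by metis
  have "disjoint_family_on K W"
    using G_disj KG unfolding disjoint_family_on_def by blast
  then have "simultaneous_pushing M Y W b (glue W K T) (glue W K T')"
    if "\<And>w. w \<in> W \<Longrightarrow> continuous_map Y (subtopology M (N w)) (\<lambda>y. y w)" for Y
    using simultaneous_pushing_glue[OF Hausdorff \<open>finite W\<close> _ push that] by blast
  moreover have "openin M (N w) \<and> b w \<in> N w" if "w \<in> W" for w
    using push[OF that] by (simp add: pushing_family_def)
  ultimately show ?thesis
    using that by blast
qed

section \<open>Local triviality of the restriction map\<close>

lemma simple_graph_edge_vertices:
  assumes "simple_graph V E" "{u, v} \<in> E"
  shows "u \<in> V" "v \<in> V"
  using assms by (auto simp: simple_graph_def doubleton_eq_iff)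

lemma topspace_Conf:
  "topspace (Conf V E M) = {x \<in> PiE V (\<lambda>_. topspace M). \<forall>u v. {u, v} \<in> E \<longrightarrow> x u \<noteq> x v}"
  by (auto simp: Conf_def)

lemma continuous_map_Conf_coordinate: "v \<in> V \<Longrightarrow> continuous_map (Conf V E M) M (\<lambda>x. x v)"
  unfolding Conf_def by (intro continuous_map_from_subtopology continuous_map_product_projection)

lemma continuous_map_into_Conf:
  assumes "\<And>v. v \<in> V \<Longrightarrow> continuous_map X M (\<lambda>x. f x v)"
    and "\<And>x. x \<in> topspace X \<Longrightarrow> f x \<in> topspace (Conf V E M)"
  shows "continuous_map X (Conf V E M) f"
  using assms unfolding Conf_def continuous_map_in_subtopology continuous_map_componentwise
  by (auto simp: PiE_iff)

lemma continuous_map_Conf_restrict: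
  assumes "subgraph W F V E"
  shows "continuous_map (Conf V E M) (Conf W F M) (\<lambda>x. restrict x W)"
proof (rule continuous_map_into_Conf)
  show "continuous_map (Conf V E M) M (\<lambda>x. restrict x W w)" if "w \<in> W" for w
    using that assms continuous_map_Conf_coordinate[of w V E M] by (auto simp: subgraph_def)
  show "restrict x W \<in> topspace (Conf W F M)" if "x \<in> topspace (Conf V E M)" for x
    using that assms by (fastforce simp: topspace_Conf subgraph_def PiE_iff)
qed

lemma Conf_fibre_shift:
  assumes graph: "simple_graph V E" and "W \<subseteq> V" and a: "a \<in> topspace (Conf W F M)"
    and z: "z \<in> topspace (Conf V E M)"
    and h: "h ` topspace M \<subseteq> topspace M" "inj_on h (topspace M)" "\<And>w. w \<in> W \<Longrightarrow> h (z w) = a w"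
  shows "restrict (\<lambda>v. h (z v)) V \<in> topspace (Conf V E M)" "restrict (restrict (\<lambda>v. h (z v)) V) W = a"
proof -
  have "h (z u) \<noteq> h (z v)" if "{u, v} \<in> E" for u v
  proof -
    have "z u \<in> topspace M" "z v \<in> topspace M" "z u \<noteq> z v"
      using z simple_graph_edge_vertices[OF graph that] that by (auto simp: topspace_Conf PiE_iff)
    then show ?thesis
      using h(2) by (auto dest: inj_onD)
  qed
  then show "restrict (\<lambda>v. h (z v)) V \<in> topspace (Conf V E M)"
    using z h(1) simple_graph_edge_vertices[OF graph] by (auto simp: topspace_Conf PiE_iff)
  show "restrict (restrict (\<lambda>v. h (z v)) V) W = a"
    using a h(3) \<open>W \<subseteq> V\<close> by (auto simp: topspace_Conf PiE_iff fun_eq_iff extensional_def)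
qed

lemma continuous_map_Conf_compose:
  assumes "continuous_map X Y q" "continuous_map X (Conf V E M) z"
    and "continuous_map (prod_topology Y M) M (\<lambda>p. h (fst p) (snd p))"
    and "\<And>x. x \<in> topspace X \<Longrightarrow> f x \<in> topspace (Conf V E M)"
    and "\<And>x v. v \<in> V \<Longrightarrow> f x v = h (q x) (z x v)"
  shows "continuous_map X (Conf V E M) f"
proof (rule continuous_map_into_Conf)
  fix v assume "v \<in> V"
  have "continuous_map X (prod_topology Y M) (\<lambda>x. (q x, z x v))"
    using assms(1) continuous_map_compose[OF assms(2) continuous_map_Conf_coordinate[OF \<open>v \<in> V\<close>]]
    by (simp add: continuous_map_paired o_def)
  from continuous_map_compose[OF this assms(3)]
  show "continuous_map X M (\<lambda>x. f x v)"
    using assms(5)[OF \<open>v \<in> V\<close>] by (simp add: o_def)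
qed (rule assms(4))

lemma Conf_restrict_trivialization:
  assumes graph: "simple_graph V E" and sub: "subgraph W F V E" and b: "b \<in> topspace (Conf W F M)"
    and push: "simultaneous_pushing M (subtopology (Conf W F M) U) W b \<Theta> \<Theta>'"
  shows "homeomorphic_map
           (subtopology (Conf V E M) {e \<in> topspace (Conf V E M). restrict e W \<in> U})
           (prod_topology (subtopology (Conf W F M) U)
              (subtopology (Conf V E M) {e \<in> topspace (Conf V E M). restrict e W = b}))
           (\<lambda>e. (restrict e W, restrict (\<lambda>v. \<Theta>' (restrict e W) (e v)) V))"
proof -
  let ?C = "Conf V E M" and ?Y = "subtopology (Conf W F M) U"
  define D where "D = subtopology ?C {e \<in> topspace ?C. restrict e W \<in> U}"
  define Fib where "Fib = subtopology ?C {e \<in> topspace ?C. restrict e W = b}"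
  define \<phi>' where "\<phi>' e = restrict (\<lambda>v. \<Theta>' (restrict e W) (e v)) V" for e
  define \<phi> where "\<phi> e = (restrict e W, \<phi>' e)" for e
  define \<psi> where "\<psi> q = restrict (\<lambda>v. \<Theta> (fst q) (snd q v)) V" for q
  have WV: "W \<subseteq> V"
    using sub by (simp add: subgraph_def)
  have inverse: "\<Theta> y m \<in> topspace M" "\<Theta>' y m \<in> topspace M" "\<Theta> y (\<Theta>' y m) = m" "\<Theta>' y (\<Theta> y m) = m"
    if "y \<in> topspace ?Y" "m \<in> topspace M" for y m
    using push that by (auto simp: simultaneous_pushing_def)
  have cont_\<Theta>: "continuous_map (prod_topology ?Y M) M (\<lambda>p. \<Theta> (fst p) (snd p))"
    and cont_\<Theta>': "continuous_map (prod_topology ?Y M) M (\<lambda>p. \<Theta>' (fst p) (snd p))"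
    using push by (auto simp: simultaneous_pushing_def)
  have inj: "inj_on (\<Theta> y) (topspace M)" "inj_on (\<Theta>' y) (topspace M)" if "y \<in> topspace ?Y" for y
    using inverse[OF that] by (metis inj_on_def)+
  have bM: "b w \<in> topspace M" if "w \<in> W" for w
    using b that by (auto simp: topspace_Conf)
  have moves: "\<Theta> y (b w) = y w" "\<Theta>' y (y w) = b w" if "y \<in> topspace ?Y" "w \<in> W" for y w
    using push that inverse(4)[OF that(1) bM[OF that(2)]] by (auto simp: simultaneous_pushing_def)
  have restrict_cont_D: "continuous_map D ?Y (\<lambda>e. restrict e W)"
    using continuous_map_from_subtopology[OF continuous_map_Conf_restrict[OF sub]]
    by (auto simp: D_def continuous_map_in_subtopology)
  have topD: "topspace D = {e \<in> topspace ?C. restrict e W \<in> U}"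
    and topFib: "topspace Fib = {e \<in> topspace ?C. restrict e W = b}"
    by (auto simp: D_def Fib_def)
  have id_D: "continuous_map D ?C (\<lambda>e. e)" and id_Fib: "continuous_map Fib ?C (\<lambda>e. e)"
    unfolding D_def Fib_def by (simp_all add: continuous_map_from_subtopology)
  have restrict_D: "restrict e W \<in> topspace ?Y" if "e \<in> topspace D" for e
    using continuous_map_image_subset_topspace[OF restrict_cont_D] that by blast
  have \<phi>'_in: "\<phi>' e \<in> topspace Fib" if "e \<in> topspace D" for e
  proof -
    note y = restrict_D[OF that]
    have "\<Theta>' (restrict e W) (e w) = b w" if "w \<in> W" for w
      using moves(2)[OF y that] that by simp
    then show ?thesis
      using Conf_fibre_shift[OF graph WV b, of e "\<Theta>' (restrict e W)"] that inverse[OF y] inj[OF y]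
      by (auto simp: \<phi>'_def topFib topD)
  qed
  have \<psi>_fibre: "\<psi> (y, z) \<in> topspace ?C" "restrict (\<psi> (y, z)) W = y"
    if y: "y \<in> topspace ?Y" and z: "z \<in> topspace Fib" for y z
  proof -
    have "z w = b w" if "w \<in> W" for w
      using z that by (metis (mono_tags, lifting) mem_Collect_eq restrict_apply' topFib)
    then show "\<psi> (y, z) \<in> topspace ?C" "restrict (\<psi> (y, z)) W = y"
      using Conf_fibre_shift[OF graph WV, of y F M z "\<Theta> y"] y z inverse[OF y] inj[OF y] moves(1)[OF y]
      by (auto simp: \<psi>_def topFib)
  qed
  then have \<psi>_in: "\<psi> q \<in> topspace D" if "q \<in> topspace ?Y \<times> topspace Fib" for q
    using that by (auto simp: topD)
  have \<psi>\<phi>: "\<psi> (\<phi> e) = e" if "e \<in> topspace D" for e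
    using that inverse(3)[OF restrict_D[OF that]]
    by (auto simp: \<phi>_def \<phi>'_def \<psi>_def topD topspace_Conf PiE_iff extensional_def fun_eq_iff)
  have \<phi>\<psi>: "\<phi> (\<psi> (y, z)) = (y, z)" if "y \<in> topspace ?Y" "z \<in> topspace Fib" for y z
  proof -
    have "restrict (\<lambda>v. \<Theta>' y (\<psi> (y, z) v)) V = z"
      using that inverse(4)[OF that(1)]
      by (auto simp: \<psi>_def topFib topspace_Conf PiE_iff extensional_def fun_eq_iff)
    then show ?thesis
      using \<psi>_fibre(2)[OF that] by (simp add: \<phi>_def \<phi>'_def)
  qed
  have "continuous_map D ?C \<phi>'"
    using \<phi>'_in by (intro continuous_map_Conf_compose[OF restrict_cont_D id_D cont_\<Theta>'])
      (auto simp: \<phi>'_def topFib restrict_def)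
  then have "continuous_map D Fib \<phi>'"
    using \<phi>'_in unfolding topFib unfolding Fib_def continuous_map_in_subtopology by auto
  then have "continuous_map D (prod_topology ?Y Fib) \<phi>"
    unfolding \<phi>_def continuous_map_paired using restrict_cont_D by simp
  moreover have "continuous_map (prod_topology ?Y Fib) ?C \<psi>"
    using \<psi>_fibre(1)
    by (intro continuous_map_Conf_compose[OF continuous_map_fst
          continuous_map_compose[OF continuous_map_snd id_Fib, unfolded o_def] cont_\<Theta>])
      (auto simp: \<psi>_def)
  then have "continuous_map (prod_topology ?Y Fib) D \<psi>"
    using \<psi>_in unfolding topD unfolding D_def continuous_map_in_subtopology by auto
  ultimately have "homeomorphic_maps D (prod_topology ?Y Fib) \<phi> \<psi>"
    unfolding homeomorphic_maps_def using \<psi>\<phi> \<phi>\<psi> by auto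
  then show ?thesis
    unfolding D_def Fib_def \<phi>_def \<phi>'_def using homeomorphic_maps_imp_map by blast
qed

lemma Conf_restrict_local_trivialization:
  assumes M: "topological_manifold M" and graph: "simple_graph V E"
    and complete: "complete_subgraph W F V E" and b: "b \<in> topspace (Conf W F M)"
  obtains U \<Theta>' where "openin (Conf W F M) U" "b \<in> U"
    "homeomorphic_map
       (subtopology (Conf V E M) {e \<in> topspace (Conf V E M). restrict e W \<in> U})
       (prod_topology (subtopology (Conf W F M) U)
          (subtopology (Conf V E M) {e \<in> topspace (Conf V E M). restrict e W = b}))
       (\<lambda>e. (restrict e W, restrict (\<lambda>v. \<Theta>' (restrict e W) (e v)) V))"
proof -
  let ?B = "Conf W F M"
  have sub: "subgraph W F V E"
    using complete by (simp add: complete_subgraph_def)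
  have "finite W"
    using graph sub finite_subset by (auto simp: simple_graph_def subgraph_def)
  have bM: "\<And>w. w \<in> W \<Longrightarrow> b w \<in> topspace M"
    using b by (auto simp: topspace_Conf PiE_iff)
  have "inj_on b W"
    using b complete unfolding inj_on_def complete_subgraph_def topspace_Conf by blast
  obtain N \<Theta> \<Theta>' where N: "\<And>w. w \<in> W \<Longrightarrow> openin M (N w) \<and> b w \<in> N w"
    and push: "\<And>Y. (\<And>w. w \<in> W \<Longrightarrow> continuous_map Y (subtopology M (N w)) (\<lambda>y. y w)) \<Longrightarrow>
                 simultaneous_pushing M Y W b \<Theta> \<Theta>'"
    using topological_manifold_simultaneous_pushing[OF M \<open>finite W\<close> bM \<open>inj_on b W\<close>] by blast
  define U where "U = topspace ?B \<inter> PiE W N"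
  have "openin (product_topology (\<lambda>_. M) W) (PiE W N)"
    using N \<open>finite W\<close> by (simp add: openin_PiE_gen)
  then have "openin ?B U"
    unfolding U_def Conf_def openin_subtopology using N
    by (intro exI[of _ "PiE W N"]) (auto simp: PiE_iff dest: openin_subset)
  moreover have "b \<in> U"
    using b N by (auto simp: U_def topspace_Conf PiE_iff)
  moreover have "simultaneous_pushing M (subtopology ?B U) W b \<Theta> \<Theta>'"
  proof (rule push)
    fix w assume "w \<in> W"
    then show "continuous_map (subtopology ?B U) (subtopology M (N w)) (\<lambda>y. y w)"
      using continuous_map_from_subtopology[OF continuous_map_Conf_coordinate]
      by (auto simp: continuous_map_in_subtopology U_def)
  qed
  ultimately show ?thesis
    using Conf_restrict_trivialization[OF graph sub b] that by blast
qed

theorem corollary11p4: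
  fixes M :: "'a topology" and V W :: "'v set" and E F :: "'v set set"
  assumes "topological_manifold M" and "connected_space M"
    and "simple_graph V E"
    and "complete_subgraph W F V E"
  shows "locally_trivial_bundle (Conf V E M) (Conf W F M) (\<lambda>x. restrict x W)"
  unfolding locally_trivial_bundle_def
proof (intro conjI ballI)
  show "continuous_map (Conf V E M) (Conf W F M) (\<lambda>x. restrict x W)"
    using assms(4) by (intro continuous_map_Conf_restrict) (simp add: complete_subgraph_def)
qed (erule Conf_restrict_local_trivialization[OF assms(1,3,4)], intro exI conjI, assumption+, simp)

end
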